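(* Let $X_0,X_1,\ldots,X_n$ be $n+1$ independent random variables such that $X_j$ follows the Mittag-Leffler distribution with distribution function $F_{X_j}(t)=1-E_{\alpha_j}(-t^{\alpha_j})$, $t\geq0$, where $0<\alpha_j\leq1$ for $0\leq j\leq n$ and $\alpha_0=1$. Then the density function of $T=X_0+X_1+\cdots+X_n$ is $$f_T(t)=\sum_{k=n}^{\infty}(-1)^{n+k}\sum_{\Theta^k_n}\frac{t^{k_0+\sum_{j=1}^nk_j\alpha_j}}{\Gamma\big(1+k_0+\sum_{j=1}^nk_j\alpha_j\big)},\qquad t\geq0,$$ where $\Theta^k_n=\{(k_0,k_1,\ldots,k_n):\ \sum_{j=0}^nk_j=k,\ k_0\in\mathbb{N}_0,\ k_j\in\mathbb{N}_0\setminus\{0\} \text{ for } 1\leq j\leq n\}$.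
   Context: $\mathbb{N}_0$ denotes the set of nonnegative integers. $E_{\beta}(x)=\sum_{k=0}^{\infty}\frac{x^k}{\Gamma(k\beta+1)}$ is the Mittag-Leffler function. *)

theory Defs
  imports "HOL-Probability.Probability"
begin

definition mittag_leffler :: "real \<Rightarrow> real \<Rightarrow> real" where
  "mittag_leffler \<beta> x = (\<Sum>k. x ^ k / Gamma (real k * \<beta> + 1))"

definition Theta :: "nat \<Rightarrow> nat \<Rightarrow> (nat \<Rightarrow> nat) set" where
  "Theta n k = {\<kappa>. (\<forall>j>n. \<kappa> j = 0) \<and> (\<forall>j\<in>{1..n}. 1 \<le> \<kappa> j) \<and> (\<Sum>j\<le>n. \<kappa> j) = k}"

definition ml_sum_term :: "nat \<Rightarrow> (nat \<Rightarrow> real) \<Rightarrow> real \<Rightarrow> nat \<Rightarrow> real" where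
  "ml_sum_term n \<alpha> t k = (-1) ^ (n + k) *
     (\<Sum>\<kappa>\<in>Theta n k.
        t powr (real (\<kappa> 0) + (\<Sum>j=1..n. real (\<kappa> j) * \<alpha> j))
        / Gamma (1 + real (\<kappa> 0) + (\<Sum>j=1..n. real (\<kappa> j) * \<alpha> j)))"

end

theory Submission
  imports Defs
begin

text \<open>
  The distribution function 1 - E_a(-t^a) is a power series in t^a; differentiating it termwise
  gives the density f_a(t) = sum_n (-1)^n t^((n+1)a - 1) / Gamma((n+1)a) for t > 0. The density of
  X_0 + ... + X_m is obtained by induction on m as a convolution with f_a, and the Beta integral
  int_0^z (z - y)^p / Gamma(1 + p) * y^(q - 1) / Gamma(q) dy = z^(p + q) / Gamma(1 + p + q)
  turns every product of a term of the induction hypothesis with a term of f_a into a single term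
  t^e / Gamma(1 + e) indexed by a tuple of Theta. Since all these series alternate, each is split
  by sign into two series of nonnegative terms, summed in ennreal, where Tonelli's theorem allows
  the sums to be interchanged with the convolution integral.
\<close>

section \<open>Sums over countable sets in ennreal\<close>

lemma nn_integral_count_space_eq_infsum:
  fixes f :: "'a \<Rightarrow> ennreal"
  assumes "countable A"
  shows "(\<integral>\<^sup>+x. f x \<partial>count_space A) = infsum f A"
proof (cases "finite A")
  case True
  then show ?thesis by (simp only: infsum_finite nn_integral_count_space_finite)
next
  case False
  note bij = bij_betw_from_nat_into[OF assms False]
  have "(\<lambda>i. f (from_nat_into A i)) sums infsum (\<lambda>i. f (from_nat_into A i)) UNIV"
    by (intro has_sum_imp_sums has_sum_infsum nonneg_summable_on_complete) simp
  then have "(\<integral>\<^sup>+i. f (from_nat_into A i) \<partial>count_space UNIV) = infsum (\<lambda>i. f (from_nat_into A i)) UNIV"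
    by (simp add: nn_integral_count_space_nat sums_iff)
  then show ?thesis
    by (simp add: nn_integral_bij_count_space[OF bij] infsum_reindex_bij_betw[OF bij])
qed

lemma has_sum_enn2real_nn_integral_count_space:
  fixes f :: "'a \<Rightarrow> real"
  assumes A: "countable A" and nonneg: "\<And>x. x \<in> A \<Longrightarrow> 0 \<le> f x"
    and finite: "(\<integral>\<^sup>+x. ennreal (f x) \<partial>count_space A) \<noteq> \<infinity>"
  shows "(f has_sum enn2real (\<integral>\<^sup>+x. ennreal (f x) \<partial>count_space A)) A"
proof -
  define E where "E = (SUP F\<in>{F. finite F \<and> F \<subseteq> A}. \<Sum>x\<in>F. ennreal (f x))"
  have E: "(\<integral>\<^sup>+x. ennreal (f x) \<partial>count_space A) = E"
    unfolding E_def nn_integral_count_space_eq_infsum[OF A]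
    by (rule nonneg_infsum_complete) simp
  have sum_eq: "ennreal (sum f F) = (\<Sum>x\<in>F. ennreal (f x))" if "F \<subseteq> A" for F
    using nonneg that by (intro sum_ennreal[symmetric]) auto
  have "sum f F \<le> enn2real E" if "finite F" "F \<subseteq> A" for F
  proof -
    have "ennreal (sum f F) \<le> E"
      unfolding sum_eq[OF that(2)] E_def using that by (intro SUP_upper) auto
    then have "enn2real (ennreal (sum f F)) \<le> enn2real E"
      using finite E by (intro enn2real_mono) (auto simp: top.not_eq_extremum)
    then show ?thesis
      using nonneg that by (simp add: sum_nonneg subsetD)
  qed
  then have summable: "f summable_on A"
    by (intro nonneg_bdd_above_summable_on nonneg) (auto simp: bdd_above_def)
  have "ennreal (infsum f A) = (SUP F\<in>{F. finite F \<and> F \<subseteq> A}. ennreal (sum f F))"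
    by (rule infsum_nonneg_is_SUPREMUM_ennreal[OF summable nonneg])
  also have "\<dots> = E"
    unfolding E_def by (intro SUP_cong refl sum_eq) auto
  finally have "ennreal (infsum f A) = E" .
  then have "infsum f A = enn2real E"
    using infsum_nonneg[of A f] nonneg by auto
  then show ?thesis
    using has_sum_infsum[OF summable] E by simp
qed

lemma borel_measurable_nn_integral_count_space:
  assumes I: "countable I" and f: "\<And>i. i \<in> I \<Longrightarrow> (\<lambda>x. f x i) \<in> borel_measurable N"
  shows "(\<lambda>x. \<integral>\<^sup>+i. f x i \<partial>count_space I) \<in> borel_measurable N"
proof (cases "finite I")
  case True
  then show ?thesis
    by (simp only: nn_integral_count_space_finite) (rule borel_measurable_sum, rule f)
next
  case False
  note bij = bij_betw_from_nat_into[OF I False]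
  have "(\<lambda>x. \<Sum>i. f x (from_nat_into I i)) \<in> borel_measurable N"
    using bij by (intro borel_measurable_suminf_order f) (auto dest: bij_betwE)
  then show ?thesis
    by (simp add: nn_integral_bij_count_space[OF bij, symmetric] nn_integral_count_space_nat)
qed

lemma nn_integral_count_space_Times:
  assumes A: "countable A" and B: "countable B"
  shows "(\<integral>\<^sup>+x. f x \<partial>count_space A) * (\<integral>\<^sup>+y. g y \<partial>count_space B)
       = (\<integral>\<^sup>+p. f (fst p) * g (snd p) \<partial>count_space (A \<times> B))"
proof -
  interpret B: sigma_finite_measure "count_space B"
    by (rule sigma_finite_measure_count_space_countable[OF B])
  have "(\<integral>\<^sup>+x. f x \<partial>count_space A) * (\<integral>\<^sup>+y. g y \<partial>count_space B)
      = (\<integral>\<^sup>+x. \<integral>\<^sup>+y. f x * g y \<partial>count_space B \<partial>count_space A)"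
    by (simp add: nn_integral_multc[symmetric] nn_integral_cmult)
  also have "\<dots> = (\<integral>\<^sup>+p. f (fst p) * g (snd p) \<partial>(count_space A \<Otimes>\<^sub>M count_space B))"
    using B.nn_integral_fst[of "\<lambda>p. f (fst p) * g (snd p)" "count_space A"]
    by (simp add: pair_measure_countable[OF A B])
  finally show ?thesis
    by (simp add: pair_measure_countable[OF A B])
qed

lemma nn_integral_count_space_Un:
  assumes "A \<inter> B = {}"
  shows "(\<integral>\<^sup>+x. f x \<partial>count_space (A \<union> B))
       = (\<integral>\<^sup>+x. f x \<partial>count_space A) + (\<integral>\<^sup>+x. f x \<partial>count_space B)"
  using nn_integral_disjoint_pair_countspace[OF assms, of f]
  by (simp add: nn_integral_count_space_indicator)

section \<open>The Mittag-Leffler series and its density\<close>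

lemma fact_le_Gamma:
  assumes "1 \<le> N" "real N \<le> x"
  shows "fact N \<le> Gamma (x + 1)"
proof -
  have "Gamma (real N + 1) = fact N"
    using Gamma_fact[of N] by (simp add: add.commute)
  moreover have "Gamma (real N + 1) \<le> Gamma (x + 1)"
    using assms by (cases "real N = x") (auto intro!: less_imp_le Gamma_real_strict_mono)
  ultimately show ?thesis
    by simp
qed

lemma power_div_fact_le_exp:
  assumes "(0::real) \<le> x"
  shows "x ^ n / fact n \<le> exp x"
proof -
  have "(\<Sum>k\<in>{n}. x ^ k /\<^sub>R fact k) \<le> (\<Sum>k. x ^ k /\<^sub>R fact k)"
    using assms by (intro sum_le_suminf sums_summable[OF exp_converges]) auto
  then show ?thesis
    using sums_unique[OF exp_converges, of x] by (simp add: divide_inverse mult.commute)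
qed

lemma power_div_Gamma_le_geometric:
  fixes a c d :: real
  assumes ka: "1 \<le> real k * a" and c: "0 \<le> c" and d: "1 \<le> d" "c \<le> d powr a"
  shows "c ^ k / Gamma (real k * a + 1) \<le> 2 * d * exp (2 * d) * (2 powr (- a)) ^ k"
proof -
  define N where "N = nat \<lfloor>real k * a\<rfloor>"
  have N: "1 \<le> N" "real N \<le> real k * a" "real k * a < real N + 1"
    using ka by (auto simp: N_def le_nat_iff)
  have "c ^ k \<le> (d powr a) ^ k"
    using c d by (intro power_mono)
  also have "\<dots> = d powr (real k * a)"
    using d by (simp add: powr_realpow[symmetric] powr_powr mult.commute)
  also have "\<dots> \<le> d powr (real N + 1)"
    using d N by (intro powr_mono) auto
  also have "\<dots> = d * d ^ N"
    using d by (simp add: powr_add powr_realpow)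
  finally have num: "c ^ k \<le> d * d ^ N" .
  have exp_bound: "d ^ N / fact N \<le> exp (2 * d) / 2 ^ N"
    using power_div_fact_le_exp[of "2 * d" N] d by (simp add: power_mult_distrib field_simps)
  have "(2::real) powr (real k * a) \<le> 2 powr (real N + 1)"
    using N by (intro powr_mono) auto
  then have le: "(2::real) powr (real k * a) \<le> 2 * 2 ^ N"
    by (simp add: powr_add powr_realpow)
  have "(2 powr (- a)) ^ k = (2 powr (- a)) powr real k"
    by (simp add: powr_realpow)
  also have "\<dots> = 2 powr (- (real k * a))"
    by (simp only: powr_powr) (simp add: mult.commute)
  also have "\<dots> = 1 / 2 powr (real k * a)"
    by (rule powr_minus_divide)
  finally have r: "(2 powr (- a)) ^ k = 1 / 2 powr (real k * a)" .
  have "1 / 2 ^ N = 2 / (2 * 2 ^ N :: real)"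
    by simp
  also have "\<dots> \<le> 2 / 2 powr (real k * a)"
    using le by (intro divide_left_mono) auto
  finally have geom: "1 / 2 ^ N \<le> 2 * (2 powr (- a)) ^ k"
    by (simp add: r)
  have "c ^ k / Gamma (real k * a + 1) \<le> d * d ^ N / fact N"
    using num fact_le_Gamma[OF N(1,2)] c d by (intro frac_le) auto
  also have "\<dots> = d * (d ^ N / fact N)"
    by simp
  also have "\<dots> \<le> d * (exp (2 * d) * (1 / 2 ^ N))"
    using exp_bound d by (intro mult_left_mono) auto
  also have "\<dots> \<le> d * (exp (2 * d) * (2 * (2 powr (- a)) ^ k))"
    using geom d by (intro mult_left_mono) auto
  finally show ?thesis
    by (simp add: algebra_simps)
qed

lemma summable_power_div_Gamma:
  fixes a x :: real
  assumes a: "0 < a"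
  shows "summable (\<lambda>k. x ^ k / Gamma (real k * a + 1))"
proof (rule summable_comparison_test')
  define d where "d = max 1 (\<bar>x\<bar> powr (1 / a))"
  have d: "1 \<le> d" "\<bar>x\<bar> \<le> d powr a"
  proof -
    have "\<bar>x\<bar> = (\<bar>x\<bar> powr (1 / a)) powr a"
      using a by (cases "x = 0") (simp_all add: powr_powr)
    also have "\<dots> \<le> d powr a"
      using a by (intro powr_mono2) (auto simp: d_def)
    finally show "\<bar>x\<bar> \<le> d powr a" .
  qed (simp add: d_def)
  show "summable (\<lambda>k. 2 * d * exp (2 * d) * (2 powr (- a)) ^ k)"
    using a by (intro summable_mult summable_geometric) (simp add: powr_less_one)
  fix k :: nat
  assume "nat \<lceil>1 / a\<rceil> \<le> k"
  then have "1 / a \<le> real k"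
    by (simp add: nat_ceiling_le_eq)
  then have ka: "1 \<le> real k * a"
    using a by (simp add: divide_le_eq)
  have "0 < Gamma (real k * a + 1)"
    using ka by (intro Gamma_real_pos) simp
  then show "norm (x ^ k / Gamma (real k * a + 1)) \<le> 2 * d * exp (2 * d) * (2 powr (- a)) ^ k"
    using power_div_Gamma_le_geometric[OF ka _ d] by (simp add: power_abs)
qed

definition ml_coeff :: "real \<Rightarrow> nat \<Rightarrow> real" where
  "ml_coeff a k = 1 / Gamma (real k * a + 1)"

lemma mittag_leffler_eq_powser: "mittag_leffler a x = (\<Sum>k. ml_coeff a k * x ^ k)"
  unfolding mittag_leffler_def ml_coeff_def by simp

lemma summable_ml_coeff: "0 < a \<Longrightarrow> summable (\<lambda>k. ml_coeff a k * x ^ k)"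
  using summable_power_div_Gamma[of a x] by (simp add: ml_coeff_def)

lemma mittag_leffler_0 [simp]: "mittag_leffler a 0 = 1"
  unfolding mittag_leffler_eq_powser powser_zero by (simp add: ml_coeff_def)

lemma has_real_derivative_mittag_leffler:
  "0 < a \<Longrightarrow> (mittag_leffler a has_real_derivative (\<Sum>n. diffs (ml_coeff a) n * x ^ n)) (at x)"
  unfolding mittag_leffler_eq_powser[abs_def]
  by (rule termdiffs_strong_converges_everywhere) (rule summable_ml_coeff)

lemma isCont_diffs_ml_coeff_powser:
  assumes "0 < a"
  shows "isCont (\<lambda>x. \<Sum>n. diffs (ml_coeff a) n * x ^ n) x"
proof -
  have "\<And>x. summable (\<lambda>n. diffs (ml_coeff a) n * x ^ n)"
    by (rule termdiff_converges_all) (rule summable_ml_coeff[OF assms])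
  then have "((\<lambda>x. \<Sum>n. diffs (ml_coeff a) n * x ^ n)
               has_real_derivative (\<Sum>n. diffs (diffs (ml_coeff a)) n * x ^ n)) (at x)"
    by (rule termdiffs_strong_converges_everywhere)
  then show ?thesis
    by (rule DERIV_isCont)
qed

definition ml_density_term :: "real \<Rightarrow> nat \<Rightarrow> real \<Rightarrow> real" where
  "ml_density_term a n t = t powr (real (Suc n) * a - 1) / Gamma (real (Suc n) * a)"

definition ml_density :: "real \<Rightarrow> real \<Rightarrow> real" where
  "ml_density a t = (\<Sum>n. (-1) ^ n * ml_density_term a n t)"

lemma ml_density_term_nonneg: "0 < a \<Longrightarrow> 0 \<le> ml_density_term a n t"
  unfolding ml_density_term_def by (intro divide_nonneg_pos) auto

lemma diffs_ml_coeff_eq_ml_density_term: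
  assumes a: "0 < a" and t: "0 < t"
  shows "diffs (ml_coeff a) n * (t powr a) ^ n * (a * t powr (a - 1)) = ml_density_term a n t"
proof -
  define q where "q = real (Suc n) * a"
  have q: "0 < q" using a by (simp add: q_def)
  have "Gamma (q + 1) = q * Gamma q"
    using q by (intro Gamma_plus1) (auto elim!: nonpos_Ints_cases)
  then have "diffs (ml_coeff a) n = real (Suc n) / (real (Suc n) * (a * Gamma q))"
    by (simp add: diffs_def ml_coeff_def q_def mult.assoc)
  also have "\<dots> = 1 / (a * Gamma q)"
    by (rule nonzero_divide_mult_cancel_left) simp
  finally have "diffs (ml_coeff a) n = 1 / (a * Gamma q)" .
  moreover have "(t powr a) ^ n * t powr (a - 1) = t powr (q - 1)"
    using t by (simp add: q_def powr_realpow[symmetric] powr_powr powr_add[symmetric] algebra_simps)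
  ultimately show ?thesis
    using a t q by (simp add: ml_density_term_def q_def field_simps)
qed

lemma ml_density_term_sums:
  assumes a: "0 < a" and t: "0 < t"
  shows "(\<lambda>n. ml_density_term a n t)
           sums ((\<Sum>n. diffs (ml_coeff a) n * (t powr a) ^ n) * (a * t powr (a - 1)))"
    and "(\<lambda>n. (-1) ^ n * ml_density_term a n t)
           sums ((\<Sum>n. diffs (ml_coeff a) n * (- (t powr a)) ^ n) * (a * t powr (a - 1)))"
proof -
  have sums: "(\<lambda>n. diffs (ml_coeff a) n * x ^ n * (a * t powr (a - 1)))
                sums ((\<Sum>n. diffs (ml_coeff a) n * x ^ n) * (a * t powr (a - 1)))" for x
    by (intro sums_mult2 summable_sums termdiff_converges_all summable_ml_coeff a)
  show "(\<lambda>n. ml_density_term a n t)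
          sums ((\<Sum>n. diffs (ml_coeff a) n * (t powr a) ^ n) * (a * t powr (a - 1)))"
    using sums[of "t powr a"] by (simp add: diffs_ml_coeff_eq_ml_density_term[OF a t])
  show "(\<lambda>n. (-1) ^ n * ml_density_term a n t)
          sums ((\<Sum>n. diffs (ml_coeff a) n * (- (t powr a)) ^ n) * (a * t powr (a - 1)))"
    using sums[of "- (t powr a)"]
    by (simp add: power_minus[of "t powr a"] diffs_ml_coeff_eq_ml_density_term[OF a t, symmetric]
        mult.assoc mult.left_commute[of "(-1) ^ _"])
qed

lemma ml_density_eq:
  "0 < a \<Longrightarrow> 0 < t \<Longrightarrow>
     ml_density a t = (\<Sum>n. diffs (ml_coeff a) n * (- (t powr a)) ^ n) * (a * t powr (a - 1))"
  unfolding ml_density_def by (rule sums_unique[symmetric]) (rule ml_density_term_sums(2))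

lemma has_real_derivative_ml_cdf:
  assumes a: "0 < a" and t: "0 < t"
  shows "((\<lambda>t. 1 - mittag_leffler a (- (t powr a))) has_real_derivative ml_density a t) (at t)"
proof -
  have "((\<lambda>t. - (t powr a)) has_real_derivative - (a * t powr (a - 1))) (at t)"
    by (intro DERIV_minus has_real_derivative_powr t)
  from DERIV_chain2[OF has_real_derivative_mittag_leffler[OF a] this]
  have "((\<lambda>t. 1 - mittag_leffler a (- (t powr a))) has_real_derivative
          0 - (\<Sum>n. diffs (ml_coeff a) n * (- (t powr a)) ^ n) * - (a * t powr (a - 1))) (at t)"
    by (intro DERIV_diff DERIV_const)
  then show ?thesis
    by (simp add: ml_density_eq[OF a t])
qed

lemma isCont_ml_density:
  assumes a: "0 < a" and t: "0 < t"
  shows "isCont (ml_density a) t"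
proof -
  have "eventually (\<lambda>s. (\<Sum>n. diffs (ml_coeff a) n * (- (s powr a)) ^ n) * (a * s powr (a - 1))
           = ml_density a s) (nhds t)"
    using eventually_nhds_in_open[of "{0<..}" t] t
    by (auto elim!: eventually_mono simp: ml_density_eq[OF a])
  moreover have "isCont (\<lambda>s. (\<Sum>n. diffs (ml_coeff a) n * (- (s powr a)) ^ n) * (a * s powr (a - 1))) t"
    using t by (intro continuous_intros isCont_o2[OF _ isCont_diffs_ml_coeff_powser[OF a]]) auto
  ultimately show ?thesis
    by (simp add: isCont_cong)
qed

lemma borel_measurable_ml_density [measurable]: "ml_density a \<in> borel_measurable borel"
  unfolding ml_density_def[abs_def] ml_density_term_def by measurable

section \<open>Densities from differentiable distribution functions\<close>

lemma (in prob_space) distributed_if_nn_integral_eq_cdf: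
  fixes X :: "'a \<Rightarrow> real"
  assumes X: "X \<in> borel_measurable M" and [measurable]: "g \<in> borel_measurable borel"
    and cdf: "\<And>x. (\<integral>\<^sup>+t. g t * indicator {..x} t \<partial>lborel)
                    = ennreal (measure M {\<omega> \<in> space M. X \<omega> \<le> x})"
  shows "distributed M lborel X g"
proof -
  have finite_density: "finite_borel_measure (density lborel g)"
  proof -
    have "(\<Union>n. {..real n}) = UNIV"
      by (auto intro: real_arch_simple)
    moreover have "(SUP n. emeasure (density lborel g) {..real n})
                     = emeasure (density lborel g) (\<Union>n. {..real n})"
      by (intro SUP_emeasure_incseq) (auto simp: incseq_def)
    ultimately have "emeasure (density lborel g) UNIV = (SUP n. emeasure (density lborel g) {..real n})"
      by simp
    also have "\<dots> \<le> 1"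
      by (intro SUP_least) (simp add: emeasure_density cdf)
    finally have "finite_measure (density lborel g)"
      by (intro finite_measureI) (auto simp: top_unique)
    then show ?thesis
      unfolding finite_borel_measure_def finite_borel_measure_axioms_def by simp
  qed
  have "distr M borel X = density lborel g"
  proof (rule cdf_unique')
    show "finite_borel_measure (distr M borel X)"
      using X by (intro real_distribution.finite_borel_measure_M real_distribution_distr) simp
    show "cdf (distr M borel X) = cdf (density lborel g)"
    proof
      fix x
      have "cdf (distr M borel X) x = measure M (X -` {..x} \<inter> space M)"
        using X by (simp add: cdf_def measure_distr)
      also have "X -` {..x} \<inter> space M = {\<omega> \<in> space M. X \<omega> \<le> x}"
        by auto
      finally show "cdf (distr M borel X) x = cdf (density lborel g) x"
        by (simp add: cdf_def measure_def emeasure_density cdf)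
    qed
  qed fact
  then have "distr M lborel X = density lborel g"
    by (metis distr_cong sets_lborel)
  then show ?thesis
    unfolding distributed_def using X by simp
qed

lemma nn_integral_Ioo_FTC:
  fixes H h :: "real \<Rightarrow> real"
  assumes x: "0 < x"
    and deriv: "\<And>t. 0 < t \<Longrightarrow> t < x \<Longrightarrow> (H has_real_derivative h t) (at t)"
    and cont: "\<And>t. 0 < t \<Longrightarrow> t < x \<Longrightarrow> isCont h t"
    and nonneg: "\<And>t. 0 < t \<Longrightarrow> t < x \<Longrightarrow> 0 \<le> h t"
    and lim_0: "(H \<longlongrightarrow> 0) (at_right 0)" and lim_x: "(H \<longlongrightarrow> H x) (at_left x)"
  shows "(\<integral>\<^sup>+t. ennreal (indicator {0<..<x} t * h t) \<partial>lborel) = ennreal (H x)"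
proof -
  have "((H \<circ> real_of_ereal) \<longlongrightarrow> 0) (at_right (0::ereal))"
    using lim_0 by (simp add: zero_ereal_def ereal_tendsto_simps)
  moreover have "((H \<circ> real_of_ereal) \<longlongrightarrow> H x) (at_left (ereal x))"
    using lim_x by (simp add: ereal_tendsto_simps)
  ultimately have "set_integrable lborel (einterval 0 x) h" "(LBINT t=0..ereal x. h t) = H x - 0"
    using x deriv cont nonneg
    by (intro interval_integral_FTC_nonneg AE_I2; force simp: zero_ereal_def)+
  then have "set_integrable lborel {0<..<x} h" "(LINT t:{0<..<x}|lborel. h t) = H x"
    using x by (simp_all add: interval_lebesgue_integral_def zero_ereal_def)
  then show ?thesis
    using nonneg unfolding set_integrable_def set_lebesgue_integral_def
    by (subst nn_integral_eq_integral) (auto intro!: AE_I2 simp: indicator_def)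
qed

lemma (in prob_space) distributed_if_cdf_has_real_derivative:
  fixes X :: "'a \<Rightarrow> real" and H h :: "real \<Rightarrow> real"
  assumes X: "X \<in> borel_measurable M" and [measurable]: "h \<in> borel_measurable borel"
    and cdf: "\<And>t. measure M {\<omega> \<in> space M. X \<omega> \<le> t} = (if 0 \<le> t then H t else 0)"
    and H_0: "H 0 = 0" "(H \<longlongrightarrow> 0) (at_right 0)"
    and deriv: "\<And>t. 0 < t \<Longrightarrow> (H has_real_derivative h t) (at t)"
    and cont: "\<And>t. 0 < t \<Longrightarrow> isCont h t"
  shows "distributed M lborel X (\<lambda>t. ennreal (if 0 < t then h t else 0))"
    and "\<And>t. 0 < t \<Longrightarrow> 0 \<le> h t"
proof -
  define F where "F t = measure M {\<omega> \<in> space M. X \<omega> \<le> t}" for t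
  have "mono_on UNIV F"
    unfolding F_def using X by (intro mono_onI finite_measure_mono) auto
  moreover have "(F has_real_derivative h t) (at t)" if "0 < t" for t
    using that by (intro has_field_derivative_transform_within_open[OF deriv[OF that], of "{0<..}"])
      (auto simp: F_def cdf)
  ultimately show nonneg: "0 \<le> h t" if "0 < t" for t
    using that by (intro mono_on_imp_deriv_nonneg[of UNIV F]) auto
  show "distributed M lborel X (\<lambda>t. ennreal (if 0 < t then h t else 0))"
  proof (rule distributed_if_nn_integral_eq_cdf[OF X])
    fix x
    show "(\<integral>\<^sup>+t. ennreal (if 0 < t then h t else 0) * indicator {..x} t \<partial>lborel)
            = ennreal (measure M {\<omega> \<in> space M. X \<omega> \<le> x})"
    proof (cases "0 < x")
      case False
      then have "(\<lambda>t. ennreal (if 0 < t then h t else 0) * indicator {..x} t) = (\<lambda>t. 0)"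
        by (auto simp: indicator_def fun_eq_iff)
      then show ?thesis
        using False H_0 by (cases "x = 0") (simp_all add: cdf)
    next
      case True
      have "(\<integral>\<^sup>+t. ennreal (if 0 < t then h t else 0) * indicator {..x} t \<partial>lborel)
              = (\<integral>\<^sup>+t. ennreal (indicator {0<..<x} t * h t) \<partial>lborel)"
        using AE_lborel_singleton[of x]
        by (intro nn_integral_cong_AE) (auto elim!: eventually_mono simp: indicator_def)
      also have "\<dots> = ennreal (H x)"
      proof (rule nn_integral_Ioo_FTC[OF True _ _ _ H_0(2)])
        show "(H \<longlongrightarrow> H x) (at_left x)"
          using DERIV_isCont[OF deriv[OF True]] by (simp add: isCont_def filterlim_at_split)
      qed (auto intro: deriv cont nonneg)
      finally show ?thesis
        using True by (simp add: cdf)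
    qed
  qed simp
qed

lemma (in prob_space) distributed_mittag_leffler:
  fixes X :: "'a \<Rightarrow> real"
  assumes X: "X \<in> borel_measurable M" and a: "0 < a"
    and cdf: "\<And>t. measure M {\<omega> \<in> space M. X \<omega> \<le> t} =
                (if 0 \<le> t then 1 - mittag_leffler a (- (t powr a)) else 0)"
  shows "distributed M lborel X (\<lambda>t. ennreal (if 0 < t then ml_density a t else 0))"
    and "\<And>t. 0 < t \<Longrightarrow> 0 \<le> ml_density a t"
proof -
  have "((\<lambda>t. t powr a) \<longlongrightarrow> 0) (at_right (0::real))"
    using a by (intro tendsto_zero_powrI) (auto intro!: tendsto_intros eventually_at_rightI[of 0 1])
  then have "((\<lambda>t. - (t powr a)) \<longlongrightarrow> 0) (at_right (0::real))"
    by (auto dest: tendsto_minus)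
  from isCont_tendsto_compose[OF DERIV_isCont[OF has_real_derivative_mittag_leffler[OF a]] this]
  have "((\<lambda>t. 1 - mittag_leffler a (- (t powr a))) \<longlongrightarrow> 0) (at_right 0)"
    by (auto intro: tendsto_eq_intros)
  note * = distributed_if_cdf_has_real_derivative[OF X _ cdf _ this has_real_derivative_ml_cdf[OF a]
      isCont_ml_density[OF a]]
  show "distributed M lborel X (\<lambda>t. ennreal (if 0 < t then ml_density a t else 0))"
    and "\<And>t. 0 < t \<Longrightarrow> 0 \<le> ml_density a t"
    by (rule *; simp)+
qed

section \<open>Beta integrals\<close>

lemma has_integral_powr_Beta:
  fixes p q z :: real
  assumes z: "0 < z" and p: "0 \<le> p" and q: "0 < q"
  shows "((\<lambda>y. (z - y) powr p * y powr (q - 1)) has_integral z powr (p + q) * Beta q (p + 1))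
           {0<..<z}"
proof -
  define h where "h t = t powr (q - 1) * (1 - t) powr p" for t :: real
  have "(h has_integral Beta q (p + 1)) {0..1}"
    using has_integral_Beta_real[of q "p + 1"] p q unfolding h_def by simp
  moreover have "(\<lambda>x. x / (1 / z)) ` {0..1} = {0..z}"
  proof
    show "{0..z} \<subseteq> (\<lambda>x. x / (1 / z)) ` {0..1}"
    proof
      fix y assume "y \<in> {0..z}"
      then show "y \<in> (\<lambda>x. x / (1 / z)) ` {0..1}"
        using z by (intro image_eqI[of _ _ "y / z"]) (auto simp: field_simps)
    qed
  qed (use z in \<open>auto simp: mult_le_cancel_right1\<close>)
  ultimately have "((\<lambda>y. h (1 / z * y)) has_integral z * Beta q (p + 1)) {0..z}"
    using has_integral_stretch_real[of h _ 0 1 "1 / z"] z by simp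
  from has_integral_mult_right[OF this, of "z powr (p + q - 1)"]
  have "((\<lambda>y. z powr (p + q - 1) * h (1 / z * y))
           has_integral z powr (p + q - 1) * (z * Beta q (p + 1))) {0<..<z}"
    by (simp add: has_integral_Icc_iff_Ioo)
  also have "z powr (p + q - 1) * (z * Beta q (p + 1)) = z powr (p + q) * Beta q (p + 1)"
    using z by (simp add: powr_diff)
  finally have integral: "((\<lambda>y. z powr (p + q - 1) * h (1 / z * y))
                   has_integral z powr (p + q) * Beta q (p + 1)) {0<..<z}" .
  have eq: "z powr (p + q - 1) * h (1 / z * y) = (z - y) powr p * y powr (q - 1)"
    if "y \<in> {0<..<z}" for y
  proof -
    have "h (1 / z * y) = (y / z) powr (q - 1) * ((z - y) / z) powr p"
      using z by (simp add: h_def field_simps)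
    also have "\<dots> = y powr (q - 1) * (z - y) powr p / (z powr (q - 1) * z powr p)"
      using that z by (simp add: powr_divide)
    also have "z powr (q - 1) * z powr p = z powr (p + q - 1)"
      by (simp only: powr_add[symmetric]) (simp add: algebra_simps)
    finally show ?thesis
      using z by simp
  qed
  show ?thesis
    using integral has_integral_cong[of "{0<..<z}" "\<lambda>y. z powr (p + q - 1) * h (1 / z * y)"
        "\<lambda>y. (z - y) powr p * y powr (q - 1)", OF eq] by simp
qed

lemma nn_integral_powr_convolution:
  fixes p q z :: real
  assumes z: "0 < z" and p: "0 \<le> p" and q: "0 < q"
  shows "(\<integral>\<^sup>+y. ennreal (indicator {0<..<z} y *
            ((z - y) powr p / Gamma (1 + p) * (y powr (q - 1) / Gamma q))) \<partial>lborel)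
         = ennreal (z powr (p + q) / Gamma (1 + (p + q)))"
proof (rule nn_integral_has_integral_lborel)
  have "z powr (p + q) * Beta q (p + 1) / (Gamma (1 + p) * Gamma q) = z powr (p + q) / Gamma (1 + (p + q))"
  proof -
    have "0 < Gamma (1 + p)" "0 < Gamma q" "0 < Gamma (1 + (p + q))"
      using p q by simp_all
    then show ?thesis
      by (simp add: Beta_def field_simps add_ac)
  qed
  then have "((\<lambda>y. (z - y) powr p / Gamma (1 + p) * (y powr (q - 1) / Gamma q))
               has_integral z powr (p + q) / Gamma (1 + (p + q))) {0<..<z}"
    using has_integral_divide[OF has_integral_powr_Beta[OF z p q], of "Gamma (1 + p) * Gamma q"]
    by simp
  moreover have "(\<lambda>y. indicator {0<..<z} y * ((z - y) powr p / Gamma (1 + p) * (y powr (q - 1) / Gamma q)))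
      = (\<lambda>y. if y \<in> {0<..<z} then (z - y) powr p / Gamma (1 + p) * (y powr (q - 1) / Gamma q) else 0)"
    by (auto simp: fun_eq_iff)
  ultimately show "((\<lambda>y. indicator {0<..<z} y * ((z - y) powr p / Gamma (1 + p) * (y powr (q - 1) / Gamma q)))
               has_integral z powr (p + q) / Gamma (1 + (p + q))) UNIV"
    by (simp only: has_integral_restrict_UNIV)
qed (use p q in \<open>auto simp: indicator_def intro!: mult_nonneg_nonneg divide_nonneg_pos\<close>)

lemma nn_integral_powr_div_Gamma:
  fixes q z :: real
  assumes "0 < z" "0 < q"
  shows "(\<integral>\<^sup>+y. ennreal (indicator {0<..<z} y * (y powr (q - 1) / Gamma q)) \<partial>lborel)
         = ennreal (z powr q / Gamma (1 + q))"
proof -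
  have "(\<integral>\<^sup>+y. ennreal (indicator {0<..<z} y * (y powr (q - 1) / Gamma q)) \<partial>lborel)
      = (\<integral>\<^sup>+y. ennreal (indicator {0<..<z} y *
            ((z - y) powr 0 / Gamma (1 + 0) * (y powr (q - 1) / Gamma q))) \<partial>lborel)"
    by (intro nn_integral_cong) (auto simp: indicator_def)
  then show ?thesis
    using nn_integral_powr_convolution[OF assms(1) order_refl assms(2)] by simp
qed

section \<open>Index tuples and the sign decomposition\<close>

definition tuples :: "nat \<Rightarrow> (nat \<Rightarrow> nat) set" where
  "tuples m = {\<kappa>. (\<forall>j>m. \<kappa> j = 0) \<and> (\<forall>j\<in>{1..m}. 1 \<le> \<kappa> j)}"

definition signed_tuples :: "nat \<Rightarrow> bool \<Rightarrow> (nat \<Rightarrow> nat) set" where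
  "signed_tuples m s = {\<kappa> \<in> tuples m. even (m + (\<Sum>j\<le>m. \<kappa> j)) = s}"

definition tuple_exponent :: "(nat \<Rightarrow> real) \<Rightarrow> nat \<Rightarrow> (nat \<Rightarrow> nat) \<Rightarrow> real" where
  "tuple_exponent \<alpha> m \<kappa> = real (\<kappa> 0) + (\<Sum>j=1..m. real (\<kappa> j) * \<alpha> j)"

definition tuple_weight :: "(nat \<Rightarrow> real) \<Rightarrow> nat \<Rightarrow> real \<Rightarrow> (nat \<Rightarrow> nat) \<Rightarrow> real" where
  "tuple_weight \<alpha> m t \<kappa> = t powr tuple_exponent \<alpha> m \<kappa> / Gamma (1 + tuple_exponent \<alpha> m \<kappa>)"

text \<open>A tuple in signed_tuples m s contributes with sign (-1)^(m + k_0 + ... + k_m) to the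
  density of X_0 + ... + X_m, positive iff s; density_part sums the contributions of one sign.\<close>

definition density_part :: "(nat \<Rightarrow> real) \<Rightarrow> nat \<Rightarrow> bool \<Rightarrow> real \<Rightarrow> ennreal" where
  "density_part \<alpha> m s t =
     (\<integral>\<^sup>+\<kappa>. ennreal (tuple_weight \<alpha> m t \<kappa>) \<partial>count_space (signed_tuples m s))"

definition ml_density_part :: "real \<Rightarrow> bool \<Rightarrow> real \<Rightarrow> ennreal" where
  "ml_density_part a s t = (\<integral>\<^sup>+n. ennreal (ml_density_term a n t) \<partial>count_space {n. even n = s})"

definition sum_density :: "(nat \<Rightarrow> real) \<Rightarrow> nat \<Rightarrow> real \<Rightarrow> real" where
  "sum_density \<alpha> m t = enn2real (density_part \<alpha> m True t) - enn2real (density_part \<alpha> m False t)"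

lemma tuples_ge_1: "\<kappa> \<in> tuples m \<Longrightarrow> 1 \<le> j \<Longrightarrow> j \<le> m \<Longrightarrow> 1 \<le> \<kappa> j"
  by (simp add: tuples_def)

lemma countable_tuples: "countable (tuples m)"
proof (rule countable_subset)
  show "tuples m \<subseteq> (\<lambda>g j. if j \<le> m then g j else 0) ` (PiE {..m} (\<lambda>_. UNIV :: nat set))"
  proof
    fix \<kappa> assume "\<kappa> \<in> tuples m"
    then have "\<kappa> = (\<lambda>j. if j \<le> m then restrict \<kappa> {..m} j else 0)"
      by (auto simp: tuples_def fun_eq_iff)
    then show "\<kappa> \<in> (\<lambda>g j. if j \<le> m then g j else 0) ` (PiE {..m} (\<lambda>_. UNIV))"
      by (intro image_eqI[of _ _ "restrict \<kappa> {..m}"]) auto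
  qed
qed (intro countable_image countable_PiE; simp)

lemma countable_signed_tuples: "countable (signed_tuples m s)"
  by (rule countable_subset[OF _ countable_tuples[of m]]) (auto simp: signed_tuples_def)

lemma tuple_exponent_nonneg:
  assumes "\<And>j. j \<in> {1..m} \<Longrightarrow> 0 \<le> \<alpha> j"
  shows "0 \<le> tuple_exponent \<alpha> m \<kappa>"
  unfolding tuple_exponent_def using assms by (intro add_nonneg_nonneg sum_nonneg mult_nonneg_nonneg) auto

lemma Gamma_one_plus_tuple_exponent_pos:
  assumes "\<And>j. j \<in> {1..m} \<Longrightarrow> 0 \<le> \<alpha> j"
  shows "0 < Gamma (1 + tuple_exponent \<alpha> m \<kappa>)"
proof -
  have "0 \<le> tuple_exponent \<alpha> m \<kappa>"
    using assms by (rule tuple_exponent_nonneg)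
  then show ?thesis
    by (intro Gamma_real_pos) simp
qed

lemma tuple_weight_nonneg:
  assumes "\<And>j. j \<in> {1..m} \<Longrightarrow> 0 \<le> \<alpha> j"
  shows "0 \<le> tuple_weight \<alpha> m t \<kappa>"
  unfolding tuple_weight_def using assms
  by (intro divide_nonneg_pos Gamma_one_plus_tuple_exponent_pos) auto

lemma density_part_mono:
  assumes nonneg: "\<And>j. j \<in> {1..m} \<Longrightarrow> 0 \<le> \<alpha> j" and "0 \<le> t" "t \<le> t'"
  shows "density_part \<alpha> m s t \<le> density_part \<alpha> m s t'"
proof -
  have "0 \<le> tuple_exponent \<alpha> m \<kappa>" for \<kappa>
    using nonneg by (rule tuple_exponent_nonneg)
  moreover have "0 < Gamma (1 + tuple_exponent \<alpha> m \<kappa>)" for \<kappa>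
    using nonneg by (rule Gamma_one_plus_tuple_exponent_pos)
  ultimately show ?thesis
    unfolding density_part_def tuple_weight_def using assms
    by (intro nn_integral_mono ennreal_leI divide_right_mono powr_mono2) (auto intro: less_imp_le)
qed

lemma tuple_exponent_fun_upd:
  assumes "\<kappa> \<in> tuples m"
  shows "tuple_exponent \<alpha> (Suc m) (\<kappa>(Suc m := v)) = tuple_exponent \<alpha> m \<kappa> + real v * \<alpha> (Suc m)"
proof -
  have "(\<Sum>j=1..m. real ((\<kappa>(Suc m := v)) j) * \<alpha> j) = (\<Sum>j=1..m. real (\<kappa> j) * \<alpha> j)"
    by (intro sum.cong) auto
  then show ?thesis
    by (simp add: tuple_exponent_def sum.cl_ivl_Suc)
qed

lemma sum_atMost_fun_upd_Suc: "(\<Sum>j\<le>m. (\<kappa>(Suc m := v)) j) = (\<Sum>j\<le>m. \<kappa> j)"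
  by (intro sum.cong) auto

lemma drop_last_entry_signed_tuples:
  assumes "\<kappa> \<in> signed_tuples (Suc m) s"
  shows "(\<kappa>(Suc m := 0), \<kappa> (Suc m) - 1)
           \<in> signed_tuples m s \<times> {n. even n} \<union> signed_tuples m (\<not> s) \<times> {n. odd n}"
proof -
  have \<kappa>: "\<kappa> \<in> tuples (Suc m)" "even (Suc m + (\<Sum>j\<le>Suc m. \<kappa> j)) = s"
    using assms by (auto simp: signed_tuples_def)
  have \<kappa>_Suc: "1 \<le> \<kappa> (Suc m)"
    by (rule tuples_ge_1[OF \<kappa>(1)]) simp_all
  have tuple: "\<kappa>(Suc m := 0) \<in> tuples m"
    using \<kappa>(1) by (auto simp: tuples_def)
  have parity: "even (m + (\<Sum>j\<le>m. \<kappa> j) + (\<kappa> (Suc m) - 1)) = s"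
    using \<kappa>(2) \<kappa>_Suc by (simp add: algebra_simps)
  show ?thesis
  proof (cases "even (\<kappa> (Suc m) - 1)")
    case True
    then have "even (m + (\<Sum>j\<le>m. (\<kappa>(Suc m := 0)) j)) = s"
      using parity by (simp add: sum_atMost_fun_upd_Suc)
    then show ?thesis
      using tuple True by (simp add: signed_tuples_def)
  next
    case False
    then have "even (m + (\<Sum>j\<le>m. (\<kappa>(Suc m := 0)) j)) = (\<not> s)"
      using parity by (simp add: sum_atMost_fun_upd_Suc) blast
    then show ?thesis
      using tuple False by (simp add: signed_tuples_def)
  qed
qed

text \<open>Appending a last entry n + 1 to a tuple flips its sign iff n is odd.\<close>

lemma bij_betw_signed_tuples_Suc:
  "bij_betw (\<lambda>p. (fst p)(Suc m := Suc (snd p)))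
     (signed_tuples m s \<times> {n. even n} \<union> signed_tuples m (\<not> s) \<times> {n. odd n})
     (signed_tuples (Suc m) s)"
proof (rule bij_betw_byWitness[where f' = "\<lambda>\<kappa>. (\<kappa>(Suc m := 0), \<kappa> (Suc m) - 1)"])
  let ?A = "signed_tuples m s \<times> {n::nat. even n} \<union> signed_tuples m (\<not> s) \<times> {n. odd n}"
  show "\<forall>p\<in>?A. (\<lambda>\<kappa>. (\<kappa>(Suc m := 0), \<kappa> (Suc m) - 1)) ((\<lambda>p. (fst p)(Suc m := Suc (snd p))) p) = p"
  proof
    fix p assume "p \<in> ?A"
    then have "fst p \<in> tuples m"
      by (auto simp: signed_tuples_def)
    then have "(fst p)(Suc m := 0) = fst p"
      by (auto simp: tuples_def fun_eq_iff)
    then show "(\<lambda>\<kappa>. (\<kappa>(Suc m := 0), \<kappa> (Suc m) - 1)) ((\<lambda>p. (fst p)(Suc m := Suc (snd p))) p) = p"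
      by (simp add: prod_eq_iff)
  qed
  show "\<forall>\<kappa>\<in>signed_tuples (Suc m) s.
          (\<lambda>p. (fst p)(Suc m := Suc (snd p))) (\<kappa>(Suc m := 0), \<kappa> (Suc m) - 1) = \<kappa>"
  proof
    fix \<kappa> assume "\<kappa> \<in> signed_tuples (Suc m) s"
    then have "1 \<le> \<kappa> (Suc m)"
      by (intro tuples_ge_1[of \<kappa> "Suc m"]) (simp_all add: signed_tuples_def)
    then show "(\<lambda>p. (fst p)(Suc m := Suc (snd p))) (\<kappa>(Suc m := 0), \<kappa> (Suc m) - 1) = \<kappa>"
      by (auto simp: fun_eq_iff)
  qed
  show "(\<lambda>p. (fst p)(Suc m := Suc (snd p))) ` ?A \<subseteq> signed_tuples (Suc m) s"
  proof (rule image_subsetI)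
    fix p assume "p \<in> ?A"
    then have "fst p \<in> tuples m" "even (m + (\<Sum>j\<le>m. fst p j) + snd p) = s"
      by (auto simp: signed_tuples_def)
    then show "(fst p)(Suc m := Suc (snd p)) \<in> signed_tuples (Suc m) s"
      by (auto simp: signed_tuples_def tuples_def sum_atMost_fun_upd_Suc)
  qed
  show "(\<lambda>\<kappa>. (\<kappa>(Suc m := 0), \<kappa> (Suc m) - 1)) ` signed_tuples (Suc m) s \<subseteq> ?A"
    by (rule image_subsetI) (rule drop_last_entry_signed_tuples)
qed

lemma density_part_0: "density_part \<alpha> 0 s t = ml_density_part 1 s t"
proof -
  have "bij_betw (\<lambda>n j. if j = 0 then n else 0) {n. even n = s} (signed_tuples 0 s)"
    by (rule bij_betw_byWitness[where f' = "\<lambda>\<kappa>. \<kappa> 0"])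
      (auto simp: signed_tuples_def tuples_def fun_eq_iff)
  then have "density_part \<alpha> 0 s t
      = (\<integral>\<^sup>+n. ennreal (tuple_weight \<alpha> 0 t (\<lambda>j. if j = 0 then n else 0)) \<partial>count_space {n. even n = s})"
    unfolding density_part_def by (rule nn_integral_bij_count_space[symmetric])
  also have "\<dots> = ml_density_part 1 s t"
    unfolding ml_density_part_def
    by (intro nn_integral_cong) (simp add: tuple_weight_def tuple_exponent_def ml_density_term_def add.commute)
  finally show ?thesis .
qed

lemma nn_integral_tuple_weight_mult_ml_density_term:
  assumes z: "0 < z" and a: "0 < \<alpha> (Suc m)" and nonneg: "\<And>j. j \<in> {1..m} \<Longrightarrow> 0 \<le> \<alpha> j"
    and \<kappa>: "\<kappa> \<in> tuples m"
  shows "(\<integral>\<^sup>+y. ennreal (indicator {0<..<z} y *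
            (tuple_weight \<alpha> m (z - y) \<kappa> * ml_density_term (\<alpha> (Suc m)) n y)) \<partial>lborel)
         = ennreal (tuple_weight \<alpha> (Suc m) z (\<kappa>(Suc m := Suc n)))"
proof -
  define e where "e = tuple_exponent \<alpha> m \<kappa>"
  define q where "q = real (Suc n) * \<alpha> (Suc m)"
  have "0 \<le> e" "0 < q"
    using nonneg a by (auto simp: e_def q_def intro: tuple_exponent_nonneg)
  moreover have "e + q = tuple_exponent \<alpha> (Suc m) (\<kappa>(Suc m := Suc n))"
    by (simp add: e_def q_def tuple_exponent_fun_upd[OF \<kappa>])
  ultimately show ?thesis
    using nn_integral_powr_convolution[OF z, of e q]
    by (simp add: tuple_weight_def ml_density_term_def e_def q_def)
qed

lemma density_part_mult_ml_density_part:
  assumes a: "0 < a" and nonneg: "\<And>j. j \<in> {1..m} \<Longrightarrow> 0 \<le> \<alpha> j"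
  shows "density_part \<alpha> m s t * ml_density_part a b y
       = (\<integral>\<^sup>+p. ennreal (tuple_weight \<alpha> m t (fst p) * ml_density_term a (snd p) y)
            \<partial>count_space (signed_tuples m s \<times> {n. even n = b}))"
proof -
  have "density_part \<alpha> m s t * ml_density_part a b y
      = (\<integral>\<^sup>+p. ennreal (tuple_weight \<alpha> m t (fst p)) * ennreal (ml_density_term a (snd p) y)
           \<partial>count_space (signed_tuples m s \<times> {n. even n = b}))"
    unfolding density_part_def ml_density_part_def
    by (rule nn_integral_count_space_Times[OF countable_signed_tuples]) simp
  also have "\<dots> = (\<integral>\<^sup>+p. ennreal (tuple_weight \<alpha> m t (fst p) * ml_density_term a (snd p) y)
                     \<partial>count_space (signed_tuples m s \<times> {n. even n = b}))"
    using tuple_weight_nonneg[of m \<alpha>, OF nonneg] ml_density_term_nonneg[OF a]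
    by (intro nn_integral_cong) (simp add: ennreal_mult)
  finally show ?thesis .
qed

definition conv_part :: "(nat \<Rightarrow> real) \<Rightarrow> nat \<Rightarrow> bool \<Rightarrow> real \<Rightarrow> real \<Rightarrow> ennreal" where
  "conv_part \<alpha> m s z y =
     density_part \<alpha> m s (z - y) * ml_density_part (\<alpha> (Suc m)) True y
     + density_part \<alpha> m (\<not> s) (z - y) * ml_density_part (\<alpha> (Suc m)) False y"

lemma density_part_Suc:
  assumes z: "0 < z" and a: "0 < \<alpha> (Suc m)" and nonneg: "\<And>j. j \<in> {1..m} \<Longrightarrow> 0 \<le> \<alpha> j"
  shows "(\<integral>\<^sup>+y. indicator {0<..<z} y * conv_part \<alpha> m s z y \<partial>lborel) = density_part \<alpha> (Suc m) s z"
proof -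
  define a where "a = \<alpha> (Suc m)"
  have a_pos: "0 < a"
    using a by (simp add: a_def)
  define G where "G y p = ennreal (indicator {0<..<z} y *
    (tuple_weight \<alpha> m (z - y) (fst p) * ml_density_term a (snd p) y))" for y p
  define K where "K = signed_tuples m s \<times> {n::nat. even n} \<union> signed_tuples m (\<not> s) \<times> {n. odd n}"
  have countable_K: "countable K"
    unfolding K_def
    by (intro countable_Un countable_SIGMA countable_signed_tuples) (simp_all add: countableI_type)
  have [measurable]: "(\<lambda>y. G y p) \<in> borel_measurable lborel" for p
    unfolding G_def tuple_weight_def ml_density_term_def by measurable
  have part: "indicator {0<..<z} y * (density_part \<alpha> m s' (z - y) * ml_density_part a b y)
      = (\<integral>\<^sup>+p. G y p \<partial>count_space (signed_tuples m s' \<times> {n. even n = b}))" for s' b y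
  proof -
    have "indicator {0<..<z} y * (density_part \<alpha> m s' (z - y) * ml_density_part a b y)
        = indicator {0<..<z} y * (\<integral>\<^sup>+p. ennreal (tuple_weight \<alpha> m (z - y) (fst p) *
            ml_density_term a (snd p) y) \<partial>count_space (signed_tuples m s' \<times> {n. even n = b}))"
      using density_part_mult_ml_density_part[of a m \<alpha> s' "z - y" b y, OF a_pos nonneg] by simp
    also have "\<dots> = (\<integral>\<^sup>+p. indicator {0<..<z} y * ennreal (tuple_weight \<alpha> m (z - y) (fst p) *
                       ml_density_term a (snd p) y) \<partial>count_space (signed_tuples m s' \<times> {n. even n = b}))"
      by (rule nn_integral_cmult[symmetric]) simp
    also have "\<dots> = (\<integral>\<^sup>+p. G y p \<partial>count_space (signed_tuples m s' \<times> {n. even n = b}))"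
      by (intro nn_integral_cong) (simp add: G_def indicator_def)
    finally show ?thesis .
  qed
  have "(\<integral>\<^sup>+y. indicator {0<..<z} y * conv_part \<alpha> m s z y \<partial>lborel)
      = (\<integral>\<^sup>+y. \<integral>\<^sup>+p. G y p \<partial>count_space K \<partial>lborel)"
  proof -
    have "signed_tuples m s \<times> {n::nat. even n} \<inter> signed_tuples m (\<not> s) \<times> {n. odd n} = {}"
      by auto
    then show ?thesis
      unfolding K_def conv_part_def a_def[symmetric]
      by (intro nn_integral_cong) (simp add: distrib_left part nn_integral_count_space_Un)
  qed
  also have "\<dots> = (\<integral>\<^sup>+p. \<integral>\<^sup>+y. G y p \<partial>lborel \<partial>count_space K)"
    by (rule nn_integral_count_space_nn_integral[OF countable_K]) simp
  also have "\<dots> = (\<integral>\<^sup>+p. ennreal (tuple_weight \<alpha> (Suc m) z ((fst p)(Suc m := Suc (snd p))))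
                     \<partial>count_space K)"
    unfolding G_def a_def using z a nonneg
    by (intro nn_integral_cong nn_integral_tuple_weight_mult_ml_density_term)
      (auto simp: K_def signed_tuples_def)
  also have "\<dots> = density_part \<alpha> (Suc m) s z"
    unfolding density_part_def K_def by (rule nn_integral_bij_count_space[OF bij_betw_signed_tuples_Suc])
  finally show ?thesis .
qed

lemma borel_measurable_density_part [measurable]: "density_part \<alpha> m s \<in> borel_measurable borel"
  unfolding density_part_def[abs_def]
  by (rule borel_measurable_nn_integral_count_space[OF countable_signed_tuples])
    (unfold tuple_weight_def, measurable)

lemma borel_measurable_ml_density_part [measurable]: "ml_density_part a s \<in> borel_measurable borel"
  unfolding ml_density_part_def[abs_def]
  by (rule borel_measurable_nn_integral_count_space) (auto simp: ml_density_term_def)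

lemma ml_density_part_eq_suminf:
  assumes a: "0 < a" and t: "0 < t"
  shows "summable (\<lambda>n. if even n = s then ml_density_term a n t else 0)"
    and "ml_density_part a s t = ennreal (\<Sum>n. if even n = s then ml_density_term a n t else 0)"
proof -
  show summable: "summable (\<lambda>n. if even n = s then ml_density_term a n t else 0)"
    using ml_density_term_nonneg[OF a]
    by (intro summable_comparison_test'[OF sums_summable[OF ml_density_term_sums(1)[OF a t]], of 0])
      auto
  have "ml_density_part a s t
      = (\<integral>\<^sup>+n. ennreal (ml_density_term a n t) * indicator {n. even n = s} n \<partial>count_space UNIV)"
    unfolding ml_density_part_def by (rule nn_integral_count_space_indicator) simp
  also have "\<dots> = (\<Sum>n. ennreal (if even n = s then ml_density_term a n t else 0))"
    unfolding nn_integral_count_space_nat by (intro suminf_cong) (simp add: indicator_def)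
  also have "\<dots> = ennreal (\<Sum>n. if even n = s then ml_density_term a n t else 0)"
    using ml_density_term_nonneg[OF a] by (intro suminf_ennreal2 summable) auto
  finally show "ml_density_part a s t = ennreal (\<Sum>n. if even n = s then ml_density_term a n t else 0)" .
qed

lemma ml_density_part_finite: "0 < a \<Longrightarrow> 0 < t \<Longrightarrow> ml_density_part a s t \<noteq> \<infinity>"
  by (simp add: ml_density_part_eq_suminf)

lemma ml_density_eq_parts:
  assumes a: "0 < a" and t: "0 < t"
  shows "ml_density a t = enn2real (ml_density_part a True t) - enn2real (ml_density_part a False t)"
proof -
  define ev where "ev = (\<lambda>n. if even n then ml_density_term a n t else 0)"
  define od where "od = (\<lambda>n. if odd n then ml_density_term a n t else 0)"
  have summable: "summable ev" "summable od"
    using ml_density_part_eq_suminf(1)[OF a t, of True] ml_density_part_eq_suminf(1)[OF a t, of False]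
    by (simp_all add: ev_def od_def)
  have nonneg: "0 \<le> suminf ev" "0 \<le> suminf od"
    by (rule suminf_nonneg[OF summable(1)] suminf_nonneg[OF summable(2)],
        simp add: ev_def od_def ml_density_term_nonneg[OF a])+
  have "(\<lambda>n. ev n - od n) sums (suminf ev - suminf od)"
    by (intro sums_diff summable_sums summable)
  moreover have "ev n - od n = (-1) ^ n * ml_density_term a n t" for n
    by (simp add: ev_def od_def)
  ultimately have "ml_density a t = suminf ev - suminf od"
    unfolding ml_density_def by (simp add: sums_iff)
  then show ?thesis
    using nonneg ml_density_part_eq_suminf(2)[OF a t] by (simp add: ev_def od_def)
qed

lemma ml_density_part_le:
  assumes a: "0 < a" and t: "0 < t" and nonneg: "0 \<le> ml_density a t"
  shows "ml_density_part a False t \<le> ml_density_part a True t"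
proof -
  have "enn2real (ml_density_part a False t) \<le> enn2real (ml_density_part a True t)"
    using nonneg ml_density_eq_parts[OF a t] by simp
  then have "ennreal (enn2real (ml_density_part a False t)) \<le> ennreal (enn2real (ml_density_part a True t))"
    by (rule ennreal_leI)
  then show ?thesis
    using ml_density_part_finite[OF a t] by (simp add: ennreal_enn2real_if)
qed

lemma summable_powr_div_Gamma_Suc:
  assumes a: "0 < a" and z: "0 < z"
  shows "summable (\<lambda>n. z powr (real (Suc n) * a) / Gamma (1 + real (Suc n) * a))"
proof -
  have "z powr (real (Suc n) * a) / Gamma (1 + real (Suc n) * a) = ml_coeff a (Suc n) * (z powr a) ^ Suc n"
    for n
  proof -
    have "(z powr a) ^ Suc n = (z powr a) powr real (Suc n)"
      by (rule powr_realpow[symmetric]) (use z in simp)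
    also have "\<dots> = z powr (real (Suc n) * a)"
      by (simp add: powr_powr mult.commute)
    finally show ?thesis
      by (simp add: ml_coeff_def add.commute)
  qed
  then show ?thesis
    using summable_Suc_iff[of "\<lambda>k. ml_coeff a k * (z powr a) ^ k"] summable_ml_coeff[OF a]
    by simp
qed

lemma nn_integral_ml_density_parts_finite:
  assumes a: "0 < a" and z: "0 < z"
  shows "(\<integral>\<^sup>+y. indicator {0<..<z} y * (ml_density_part a True y + ml_density_part a False y) \<partial>lborel)
           \<noteq> \<infinity>"
proof -
  define c where "c n = z powr (real (Suc n) * a) / Gamma (1 + real (Suc n) * a)" for n
  have "ml_density_part a True y + ml_density_part a False y
          = (\<integral>\<^sup>+n. ennreal (ml_density_term a n y) \<partial>count_space UNIV)" for y
  proof -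
    have "{n::nat. even n} \<inter> {n. odd n} = {}" "{n::nat. even n} \<union> {n. odd n} = UNIV"
      by auto
    then show ?thesis
      unfolding ml_density_part_def
      using nn_integral_count_space_Un[of "{n. even n}" "{n. odd n}" "\<lambda>n. ennreal (ml_density_term a n y)"]
      by simp
  qed
  then have "(\<integral>\<^sup>+y. indicator {0<..<z} y * (ml_density_part a True y + ml_density_part a False y) \<partial>lborel)
      = (\<integral>\<^sup>+y. \<integral>\<^sup>+n. ennreal (indicator {0<..<z} y * ml_density_term a n y) \<partial>count_space UNIV \<partial>lborel)"
    by (intro nn_integral_cong)
      (auto simp: nn_integral_cmult[symmetric] indicator_def intro!: nn_integral_cong)
  also have "\<dots> = (\<integral>\<^sup>+n. \<integral>\<^sup>+y. ennreal (indicator {0<..<z} y * ml_density_term a n y) \<partial>lborel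
                     \<partial>count_space UNIV)"
    by (rule nn_integral_count_space_nn_integral) (auto simp: ml_density_term_def)
  also have "\<dots> = (\<Sum>n. ennreal (c n))"
    unfolding nn_integral_count_space_nat c_def ml_density_term_def
    using a z by (intro suminf_cong nn_integral_powr_div_Gamma) auto
  also have "\<dots> \<noteq> \<top>"
  proof (rule ennreal_suminf_neq_top)
    show "summable c"
      unfolding c_def by (rule summable_powr_div_Gamma_Suc[OF a z])
    show "0 \<le> c n" for n
      using a unfolding c_def by (intro divide_nonneg_pos Gamma_real_pos add_pos_nonneg) auto
  qed
  finally show ?thesis
    by simp
qed

lemma density_part_finite:
  assumes "\<And>j. j \<in> {1..m} \<Longrightarrow> 0 < \<alpha> j" and "0 < t"
  shows "density_part \<alpha> m s t \<noteq> \<infinity>"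
  using assms
proof (induction m arbitrary: s t)
  case 0
  then show ?case
    using ml_density_part_finite[of 1 t s] by (simp add: density_part_0)
next
  case (Suc m)
  define a where "a = \<alpha> (Suc m)"
  have a: "0 < a"
    using Suc.prems by (simp add: a_def)
  have nonneg: "\<And>j. j \<in> {1..m} \<Longrightarrow> 0 \<le> \<alpha> j"
    using Suc.prems by (auto intro: less_imp_le)
  define C where "C = density_part \<alpha> m s t + density_part \<alpha> m (\<not> s) t"
  have "C \<noteq> \<infinity>"
    unfolding C_def using Suc by (simp add: ennreal_add_eq_top)
  have bound: "density_part \<alpha> m s' (t - y) \<le> C" if "s' = s \<or> s' = (\<not> s)" "0 < y" "y < t" for s' y
  proof -
    have "density_part \<alpha> m s' (t - y) \<le> density_part \<alpha> m s' t"
      using that by (intro density_part_mono[OF nonneg]) auto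
    also have "\<dots> \<le> C"
      using that unfolding C_def by (auto intro: add_increasing add_increasing2)
    finally show ?thesis .
  qed
  have "density_part \<alpha> (Suc m) s t = (\<integral>\<^sup>+y. indicator {0<..<t} y * conv_part \<alpha> m s t y \<partial>lborel)"
    using density_part_Suc[OF Suc.prems(2), of \<alpha> m s] a nonneg by (simp add: a_def)
  also have "\<dots> \<le> (\<integral>\<^sup>+y. C * (indicator {0<..<t} y * (ml_density_part a True y + ml_density_part a False y))
                   \<partial>lborel)"
    using bound by (intro nn_integral_mono)
      (auto simp: conv_part_def a_def indicator_def distrib_left intro!: add_mono mult_right_mono)
  also have "\<dots> = C * (\<integral>\<^sup>+y. indicator {0<..<t} y * (ml_density_part a True y + ml_density_part a False y)
                     \<partial>lborel)"
    by (rule nn_integral_cmult) simp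
  also have "\<dots> < \<infinity>"
    using \<open>C \<noteq> \<infinity>\<close> nn_integral_ml_density_parts_finite[OF a Suc.prems(2)]
    by (simp add: ennreal_mult_less_top top.not_eq_extremum)
  finally show ?case
    by simp
qed

section \<open>The series of the theorem\<close>

lemma finite_Theta: "finite (Theta n k)"
proof (rule finite_subset)
  show "Theta n k \<subseteq> {f. \<forall>x. (x \<in> {..n} \<longrightarrow> f x \<in> {..k}) \<and> (x \<notin> {..n} \<longrightarrow> f x = 0)}"
  proof
    fix \<kappa> assume \<kappa>: "\<kappa> \<in> Theta n k"
    have "\<kappa> x \<le> k" if "x \<le> n" for x
      using \<kappa> member_le_sum[of x "{..n}" \<kappa>] that by (simp add: Theta_def)
    then show "\<kappa> \<in> {f. \<forall>x. (x \<in> {..n} \<longrightarrow> f x \<in> {..k}) \<and> (x \<notin> {..n} \<longrightarrow> f x = 0)}"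
      using \<kappa> by (auto simp: Theta_def)
  qed
qed (rule finite_set_of_finite_funs; simp)

lemma Theta_empty: "k < n \<Longrightarrow> Theta n k = {}"
proof (rule ccontr)
  assume "k < n" "Theta n k \<noteq> {}"
  then obtain \<kappa> where \<kappa>: "\<kappa> \<in> Theta n k"
    by auto
  have "n = (\<Sum>j=1..n. 1::nat)"
    by simp
  also have "\<dots> \<le> (\<Sum>j=1..n. \<kappa> j)"
    using \<kappa> by (intro sum_mono) (auto simp: Theta_def)
  also have "\<dots> \<le> (\<Sum>j\<le>n. \<kappa> j)"
    by (intro sum_mono2) auto
  finally show False
    using \<kappa> \<open>k < n\<close> by (simp add: Theta_def)
qed

lemma bij_betw_tuples_Theta: "bij_betw (\<lambda>\<kappa>. (\<Sum>j\<le>n. \<kappa> j, \<kappa>)) (tuples n) (SIGMA k:UNIV. Theta n k)"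
  by (rule bij_betw_byWitness[where f' = snd]) (auto simp: tuples_def Theta_def)

lemma has_sum_signed_tuple_weight:
  assumes pos: "\<And>j. j \<in> {1..n} \<Longrightarrow> 0 < \<alpha> j" and t: "0 < t"
  shows "((\<lambda>\<kappa>. (-1) ^ (n + (\<Sum>j\<le>n. \<kappa> j)) * tuple_weight \<alpha> n t \<kappa>) has_sum sum_density \<alpha> n t)
           (tuples n)"
proof -
  have part: "(tuple_weight \<alpha> n t has_sum enn2real (density_part \<alpha> n s t)) (signed_tuples n s)" for s
    unfolding density_part_def
  proof (rule has_sum_enn2real_nn_integral_count_space[OF countable_signed_tuples])
    show "0 \<le> tuple_weight \<alpha> n t \<kappa>" for \<kappa>
      using pos by (intro tuple_weight_nonneg less_imp_le)
    show "(\<integral>\<^sup>+\<kappa>. ennreal (tuple_weight \<alpha> n t \<kappa>) \<partial>count_space (signed_tuples n s)) \<noteq> \<infinity>"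
      using density_part_finite[OF pos t] by (simp add: density_part_def)
  qed
  have "((\<lambda>\<kappa>. (-1) ^ (n + (\<Sum>j\<le>n. \<kappa> j)) * tuple_weight \<alpha> n t \<kappa>)
          has_sum enn2real (density_part \<alpha> n True t)) (signed_tuples n True)"
    using part[of True] by (subst has_sum_cong[where g = "tuple_weight \<alpha> n t"]) (auto simp: signed_tuples_def)
  moreover have "((\<lambda>\<kappa>. (-1) ^ (n + (\<Sum>j\<le>n. \<kappa> j)) * tuple_weight \<alpha> n t \<kappa>)
          has_sum - enn2real (density_part \<alpha> n False t)) (signed_tuples n False)"
    using has_sum_uminusI[OF part[of False]]
    by (subst has_sum_cong[where g = "\<lambda>\<kappa>. - tuple_weight \<alpha> n t \<kappa>"]) (auto simp: signed_tuples_def)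
  moreover have "signed_tuples n True \<inter> signed_tuples n False = {}"
    by (auto simp: signed_tuples_def)
  ultimately have "((\<lambda>\<kappa>. (-1) ^ (n + (\<Sum>j\<le>n. \<kappa> j)) * tuple_weight \<alpha> n t \<kappa>)
          has_sum sum_density \<alpha> n t) (signed_tuples n True \<union> signed_tuples n False)"
    unfolding sum_density_def diff_conv_add_uminus by (rule has_sum_Un_disjoint)
  moreover have "signed_tuples n True \<union> signed_tuples n False = tuples n"
    by (auto simp: signed_tuples_def)
  ultimately show ?thesis
    by simp
qed

lemma ml_sum_term_sums:
  assumes "\<And>j. j \<in> {1..n} \<Longrightarrow> 0 < \<alpha> j" and "0 < t"
  shows "(\<lambda>k. ml_sum_term n \<alpha> t (k + n)) sums sum_density \<alpha> n t"
proof -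
  define g where "g \<kappa> = (-1) ^ (n + (\<Sum>j\<le>n. \<kappa> j)) * tuple_weight \<alpha> n t \<kappa>" for \<kappa> :: "nat \<Rightarrow> nat"
  have "((\<lambda>p. g (snd p)) has_sum sum_density \<alpha> n t) (SIGMA k:UNIV. Theta n k)"
    using has_sum_reindex_bij_betw[OF bij_betw_tuples_Theta[of n], of "\<lambda>p. g (snd p)"]
      has_sum_signed_tuple_weight[of n \<alpha> t, OF assms] by (simp add: g_def)
  then have "((\<lambda>k. \<Sum>\<kappa>\<in>Theta n k. g \<kappa>) has_sum sum_density \<alpha> n t) UNIV"
    by (rule has_sum_SigmaD) (simp add: has_sum_finite finite_Theta)
  moreover have "(\<Sum>\<kappa>\<in>Theta n k. g \<kappa>) = ml_sum_term n \<alpha> t k" for k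
    unfolding ml_sum_term_def sum_distrib_left
    by (intro sum.cong refl) (auto simp: g_def Theta_def tuple_weight_def tuple_exponent_def add.assoc)
  ultimately have "ml_sum_term n \<alpha> t sums sum_density \<alpha> n t"
    by (intro has_sum_imp_sums) simp
  then have "(\<lambda>k. ml_sum_term n \<alpha> t (k + n)) sums (sum_density \<alpha> n t - (\<Sum>k<n. ml_sum_term n \<alpha> t k))"
    by (rule sums_split_initial_segment)
  moreover have "(\<Sum>k<n. ml_sum_term n \<alpha> t k) = 0"
    by (intro sum.neutral) (auto simp: ml_sum_term_def Theta_empty)
  ultimately show ?thesis
    by simp
qed

section \<open>Convolution\<close>

lemma ennreal_diff_mult_diff:
  fixes x1 x0 y1 y0 :: ennreal
  assumes f: "x1 \<noteq> \<infinity>" "x0 \<noteq> \<infinity>" "y1 \<noteq> \<infinity>" "y0 \<noteq> \<infinity>" and le: "x0 \<le> x1" "y0 \<le> y1"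
  shows "ennreal ((enn2real x1 - enn2real x0) * (enn2real y1 - enn2real y0)) = (x1 * y1 + x0 * y0) - (x0 * y1 + x1 * y0)"
    and "x0 * y1 + x1 * y0 \<le> x1 * y1 + x0 * y0"
proof -
  obtain r1 where r1: "x1 = ennreal r1" "0 \<le> r1" using f(1) by (cases x1 rule: ennreal_cases) auto
  obtain r0 where r0: "x0 = ennreal r0" "0 \<le> r0" using f(2) by (cases x0 rule: ennreal_cases) auto
  obtain s1 where s1: "y1 = ennreal s1" "0 \<le> s1" using f(3) by (cases y1 rule: ennreal_cases) auto
  obtain s0 where s0: "y0 = ennreal s0" "0 \<le> s0" using f(4) by (cases y0 rule: ennreal_cases) auto
  have rr: "r0 \<le> r1" "s0 \<le> s1" using le r1 r0 s1 s0 by auto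
  have p: "0 \<le> (r1 - r0) * (s1 - s0)" using rr by simp
  have e1: "x1 * y1 + x0 * y0 = ennreal (r1 * s1 + r0 * s0)"
    using r1 r0 s1 s0 by (simp add: ennreal_mult ennreal_plus)
  have e2: "x0 * y1 + x1 * y0 = ennreal (r0 * s1 + r1 * s0)"
    using r1 r0 s1 s0 by (simp add: ennreal_mult ennreal_plus)
  have le2: "r0 * s1 + r1 * s0 \<le> r1 * s1 + r0 * s0" using p by (simp add: algebra_simps)
  show "x0 * y1 + x1 * y0 \<le> x1 * y1 + x0 * y0" unfolding e1 e2 using le2 by (rule ennreal_leI)
  have "(x1 * y1 + x0 * y0) - (x0 * y1 + x1 * y0) = ennreal (r1 * s1 + r0 * s0 - (r0 * s1 + r1 * s0))"
    unfolding e1 e2 using r1 r0 s1 s0 by (intro ennreal_minus) (auto intro: add_nonneg_nonneg)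
  also have "r1 * s1 + r0 * s0 - (r0 * s1 + r1 * s0) = (r1 - r0) * (s1 - s0)" by (simp add: algebra_simps)
  finally show "ennreal ((enn2real x1 - enn2real x0) * (enn2real y1 - enn2real y0)) = (x1 * y1 + x0 * y0) - (x0 * y1 + x1 * y0)"
    using r1 r0 s1 s0 by simp
qed

lemma sum_density_mult_ml_density:
  assumes pos: "\<And>j. j \<in> {1..Suc m} \<Longrightarrow> 0 < \<alpha> j"
    and parts_le: "density_part \<alpha> m False (z - y) \<le> density_part \<alpha> m True (z - y)"
    and ml_nonneg: "0 \<le> ml_density (\<alpha> (Suc m)) y"
    and y: "0 < y" "y < z"
  shows "ennreal (sum_density \<alpha> m (z - y) * ml_density (\<alpha> (Suc m)) y)
           = conv_part \<alpha> m True z y - conv_part \<alpha> m False z y"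
    and "conv_part \<alpha> m False z y \<le> conv_part \<alpha> m True z y"
proof -
  have a: "0 < \<alpha> (Suc m)"
    using pos by simp
  have E: "density_part \<alpha> m s (z - y) \<noteq> \<infinity>" for s
    using pos y by (intro density_part_finite) auto
  have F: "ml_density_part (\<alpha> (Suc m)) s y \<noteq> \<infinity>" for s
    using a y(1) by (rule ml_density_part_finite)
  have F_le: "ml_density_part (\<alpha> (Suc m)) False y \<le> ml_density_part (\<alpha> (Suc m)) True y"
    using a y(1) ml_nonneg by (rule ml_density_part_le)
  note diff = ennreal_diff_mult_diff[OF E E F F parts_le F_le]
  show "ennreal (sum_density \<alpha> m (z - y) * ml_density (\<alpha> (Suc m)) y)
          = conv_part \<alpha> m True z y - conv_part \<alpha> m False z y"
    using diff(1) unfolding sum_density_def ml_density_eq_parts[OF a y(1)] conv_part_def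
    by simp
  show "conv_part \<alpha> m False z y \<le> conv_part \<alpha> m True z y"
    using diff(2) unfolding conv_part_def by simp
qed

lemma nn_integral_sum_density_convolution:
  assumes pos: "\<And>j. j \<in> {1..Suc m} \<Longrightarrow> 0 < \<alpha> j"
    and parts_le: "\<And>t. 0 < t \<Longrightarrow> density_part \<alpha> m False t \<le> density_part \<alpha> m True t"
    and ml_nonneg: "\<And>t. 0 < t \<Longrightarrow> 0 \<le> ml_density (\<alpha> (Suc m)) t"
    and z: "0 < z"
  shows "(\<integral>\<^sup>+y. ennreal (if 0 < z - y then sum_density \<alpha> m (z - y) else 0) *
             ennreal (if 0 < y then ml_density (\<alpha> (Suc m)) y else 0) \<partial>lborel)
           = ennreal (sum_density \<alpha> (Suc m) z)"
    and "density_part \<alpha> (Suc m) False z \<le> density_part \<alpha> (Suc m) True z"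
proof -
  have a: "0 < \<alpha> (Suc m)" and nonneg: "\<And>j. j \<in> {1..m} \<Longrightarrow> 0 \<le> \<alpha> j"
    using pos by (auto intro: less_imp_le)
  have pointwise: "ennreal (sum_density \<alpha> m (z - y) * ml_density (\<alpha> (Suc m)) y)
                     = conv_part \<alpha> m True z y - conv_part \<alpha> m False z y"
      "conv_part \<alpha> m False z y \<le> conv_part \<alpha> m True z y" if "0 < y" "y < z" for y
    using sum_density_mult_ml_density[OF pos parts_le[of "z - y"] ml_nonneg[of y] that] that by auto
  have integral: "(\<integral>\<^sup>+y. indicator {0<..<z} y * conv_part \<alpha> m s z y \<partial>lborel) = density_part \<alpha> (Suc m) s z"
    for s using z a nonneg by (rule density_part_Suc)
  have le: "indicator {0<..<z} y * conv_part \<alpha> m False z y \<le> indicator {0<..<z} y * conv_part \<alpha> m True z y"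
    for y by (cases "y \<in> {0<..<z}") (simp_all add: pointwise(2))
  show parts_le_Suc: "density_part \<alpha> (Suc m) False z \<le> density_part \<alpha> (Suc m) True z"
    unfolding integral[symmetric] by (intro nn_integral_mono le)
  have finite: "density_part \<alpha> (Suc m) s z \<noteq> \<infinity>" for s
    using pos z by (rule density_part_finite)
  have "(\<integral>\<^sup>+y. ennreal (if 0 < z - y then sum_density \<alpha> m (z - y) else 0) *
             ennreal (if 0 < y then ml_density (\<alpha> (Suc m)) y else 0) \<partial>lborel)
      = (\<integral>\<^sup>+y. indicator {0<..<z} y * conv_part \<alpha> m True z y
                - indicator {0<..<z} y * conv_part \<alpha> m False z y \<partial>lborel)"
    by (intro nn_integral_cong) (simp add: indicator_def ennreal_mult''[symmetric] ml_nonneg pointwise(1))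
  also have "\<dots> = density_part \<alpha> (Suc m) True z - density_part \<alpha> (Suc m) False z"
  proof -
    have "conv_part \<alpha> m s z \<in> borel_measurable lborel" for s
      unfolding conv_part_def by measurable
    then show ?thesis
      unfolding integral[symmetric] using finite[of False] integral[of False]
      by (intro nn_integral_diff) (auto intro: AE_I2 le)
  qed
  also have "\<dots> = ennreal (sum_density \<alpha> (Suc m) z)"
    using parts_le_Suc finite
    by (simp add: sum_density_def ennreal_minus[symmetric] ennreal_enn2real_if enn2real_mono)
  finally show "(\<integral>\<^sup>+y. ennreal (if 0 < z - y then sum_density \<alpha> m (z - y) else 0) *
             ennreal (if 0 < y then ml_density (\<alpha> (Suc m)) y else 0) \<partial>lborel)
           = ennreal (sum_density \<alpha> (Suc m) z)" .
qed

lemma (in prob_space) indep_var_partial_sum: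
  fixes X :: "nat \<Rightarrow> 'a \<Rightarrow> real"
  assumes "indep_vars (\<lambda>_. borel) X {..n}" and "Suc m \<le> n"
  shows "indep_var borel (\<lambda>\<omega>. \<Sum>j\<le>m. X j \<omega>) borel (X (Suc m))"
proof -
  have "indep_var (PiM {..m} (\<lambda>_. borel)) (\<lambda>\<omega>. restrict (\<lambda>i. X i \<omega>) {..m})
                  (PiM {Suc m} (\<lambda>_. borel)) (\<lambda>\<omega>. restrict (\<lambda>i. X i \<omega>) {Suc m})"
    using assms by (intro indep_var_restrict) auto
  moreover have "(\<lambda>f. \<Sum>j\<le>m. f j) \<in> measurable (PiM {..m} (\<lambda>_. borel)) (borel :: real measure)"
    by measurable
  moreover have "(\<lambda>f. f (Suc m)) \<in> measurable (PiM {Suc m} (\<lambda>_. borel)) (borel :: real measure)"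
    by measurable
  ultimately have "indep_var borel ((\<lambda>f. \<Sum>j\<le>m. f j) \<circ> (\<lambda>\<omega>. restrict (\<lambda>i. X i \<omega>) {..m}))
                     borel ((\<lambda>f. f (Suc m)) \<circ> (\<lambda>\<omega>. restrict (\<lambda>i. X i \<omega>) {Suc m}))"
    by (rule indep_var_compose)
  then show ?thesis
    by (simp add: comp_def)
qed

lemma (in prob_space) distributed_add_ml_density:
  assumes S: "distributed M lborel S (\<lambda>t. ennreal (if 0 < t then sum_density \<alpha> m t else 0))"
    and Y: "distributed M lborel Y (\<lambda>t. ennreal (if 0 < t then ml_density (\<alpha> (Suc m)) t else 0))"
    and indep: "indep_var borel S borel Y"
    and pos: "\<And>j. j \<in> {1..Suc m} \<Longrightarrow> 0 < \<alpha> j"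
    and parts_le: "\<And>t. 0 < t \<Longrightarrow> density_part \<alpha> m False t \<le> density_part \<alpha> m True t"
    and ml_nonneg: "\<And>t. 0 < t \<Longrightarrow> 0 \<le> ml_density (\<alpha> (Suc m)) t"
  shows "distributed M lborel (\<lambda>\<omega>. S \<omega> + Y \<omega>)
           (\<lambda>t. ennreal (if 0 < t then sum_density \<alpha> (Suc m) t else 0))"
proof -
  have "(\<lambda>z. \<integral>\<^sup>+y. ennreal (if 0 < z - y then sum_density \<alpha> m (z - y) else 0) *
                      ennreal (if 0 < y then ml_density (\<alpha> (Suc m)) y else 0) \<partial>lborel)
      = (\<lambda>t. ennreal (if 0 < t then sum_density \<alpha> (Suc m) t else 0))"
  proof
    fix z :: real
    show "(\<integral>\<^sup>+y. ennreal (if 0 < z - y then sum_density \<alpha> m (z - y) else 0) *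
             ennreal (if 0 < y then ml_density (\<alpha> (Suc m)) y else 0) \<partial>lborel)
          = ennreal (if 0 < z then sum_density \<alpha> (Suc m) z else 0)"
    proof (cases "0 < z")
      case False
      then have "(\<lambda>y. ennreal (if 0 < z - y then sum_density \<alpha> m (z - y) else 0) *
                   ennreal (if 0 < y then ml_density (\<alpha> (Suc m)) y else 0)) = (\<lambda>y. 0)"
        by (auto simp: fun_eq_iff)
      then show ?thesis
        using False by simp
    next
      case True
      then show ?thesis
        using nn_integral_sum_density_convolution(1)[OF pos parts_le ml_nonneg True] by simp
    qed
  qed
  then show ?thesis
    using distributed_convolution[OF indep S Y] by simp
qed

lemma (in prob_space) distributed_sum_mittag_leffler:
  fixes X :: "nat \<Rightarrow> 'a \<Rightarrow> real"
  assumes X: "\<And>j. j \<le> n \<Longrightarrow> X j \<in> borel_measurable M"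
    and indep: "indep_vars (\<lambda>_. borel) X {..n}"
    and \<alpha>: "\<alpha> 0 = 1" "\<And>j. j \<le> n \<Longrightarrow> 0 < \<alpha> j"
    and cdf: "\<And>j t. j \<le> n \<Longrightarrow> measure M {\<omega> \<in> space M. X j \<omega> \<le> t} =
                (if 0 \<le> t then 1 - mittag_leffler (\<alpha> j) (- (t powr \<alpha> j)) else 0)"
    and "m \<le> n"
  shows "distributed M lborel (\<lambda>\<omega>. \<Sum>j\<le>m. X j \<omega>) (\<lambda>t. ennreal (if 0 < t then sum_density \<alpha> m t else 0))
         \<and> (\<forall>t>0. density_part \<alpha> m False t \<le> density_part \<alpha> m True t)"
  using \<open>m \<le> n\<close>
proof (induction m)
  case 0
  have X0: "X 0 \<in> borel_measurable M" and a0: "0 < \<alpha> 0"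
    using X \<alpha>(2) by simp_all
  note ml = distributed_mittag_leffler[OF X0 a0 cdf[of 0, OF le0], unfolded \<alpha>(1)]
  have "(\<lambda>t. ennreal (if 0 < t then ml_density 1 t else 0))
      = (\<lambda>t. ennreal (if 0 < t then sum_density \<alpha> 0 t else 0))"
    by (auto simp: fun_eq_iff sum_density_def density_part_0 ml_density_eq_parts)
  moreover have "density_part \<alpha> 0 False t \<le> density_part \<alpha> 0 True t" if "0 < t" for t
    using ml(2)[OF that] that by (simp add: density_part_0 ml_density_part_le)
  ultimately show ?case
    using ml(1) by simp
next
  case (Suc m)
  then have IH: "distributed M lborel (\<lambda>\<omega>. \<Sum>j\<le>m. X j \<omega>) (\<lambda>t. ennreal (if 0 < t then sum_density \<alpha> m t else 0))"
    "\<And>t. 0 < t \<Longrightarrow> density_part \<alpha> m False t \<le> density_part \<alpha> m True t"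
    by auto
  have pos: "\<And>j. j \<in> {1..Suc m} \<Longrightarrow> 0 < \<alpha> j"
    using \<alpha>(2) Suc.prems by auto
  note ml = distributed_mittag_leffler[OF X[OF Suc.prems] \<alpha>(2)[OF Suc.prems] cdf[OF Suc.prems]]
  have "(\<lambda>\<omega>. \<Sum>j\<le>Suc m. X j \<omega>) = (\<lambda>\<omega>. (\<Sum>j\<le>m. X j \<omega>) + X (Suc m) \<omega>)"
    by simp
  then show ?case
    using distributed_add_ml_density[OF IH(1) ml(1) indep_var_partial_sum[OF indep Suc.prems] pos IH(2) ml(2)]
      nn_integral_sum_density_convolution(2)[OF pos IH(2) ml(2)] by simp
qed

theorem corollary3p3:
  fixes M :: "'a measure" and X :: "nat \<Rightarrow> 'a \<Rightarrow> real"
    and \<alpha> :: "nat \<Rightarrow> real" and n :: nat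
  assumes "prob_space M"
    and "\<And>j. j \<le> n \<Longrightarrow> X j \<in> borel_measurable M"
    and "prob_space.indep_vars M (\<lambda>_. borel) X {..n}"
    and "\<alpha> 0 = 1"
    and "\<And>j. j \<le> n \<Longrightarrow> 0 < \<alpha> j \<and> \<alpha> j \<le> 1"
    and "\<And>j t. j \<le> n \<Longrightarrow>
           measure M {\<omega> \<in> space M. X j \<omega> \<le> t} =
             (if 0 \<le> t then 1 - mittag_leffler (\<alpha> j) (- (t powr \<alpha> j)) else 0)"
  shows "(\<forall>t>0. summable (\<lambda>m. ml_sum_term n \<alpha> t (m + n)))
       \<and> distributed M lborel (\<lambda>\<omega>. \<Sum>j\<le>n. X j \<omega>)
           (\<lambda>t. ennreal (if 0 < t then (\<Sum>m. ml_sum_term n \<alpha> t (m + n)) else 0))"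
proof -
  interpret prob_space M
    by (rule assms(1))
  have pos: "\<And>j. j \<le> n \<Longrightarrow> 0 < \<alpha> j"
    using assms(5) by blast
  have sums: "(\<lambda>m. ml_sum_term n \<alpha> t (m + n)) sums sum_density \<alpha> n t" if "0 < t" for t
    using pos that by (intro ml_sum_term_sums) auto
  have "distributed M lborel (\<lambda>\<omega>. \<Sum>j\<le>n. X j \<omega>) (\<lambda>t. ennreal (if 0 < t then sum_density \<alpha> n t else 0))"
    using distributed_sum_mittag_leffler[OF assms(2,3,4) pos assms(6) order_refl] by blast
  moreover have "(\<lambda>t. ennreal (if 0 < t then (\<Sum>m. ml_sum_term n \<alpha> t (m + n)) else 0))
      = (\<lambda>t. ennreal (if 0 < t then sum_density \<alpha> n t else 0))"
    using sums by (auto simp: fun_eq_iff sums_iff)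
  moreover have "\<forall>t>0. summable (\<lambda>m. ml_sum_term n \<alpha> t (m + n))"
    using sums sums_summable by blast
  ultimately show ?thesis
    by simp
qed

end
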